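(* Let $q\in\mathrm{Prod}(\mathcal H_p)$ be $\nu$-balanced. For $A\in\mathrm{Herm}(\mathcal H_p,q)$ define $D_q\mu^E(A):=\frac{d}{dt}\big|_{t=0}\int_X\Pi_{e^{tA/2}V_x}\,d\nu(x)$ and let $D_q\mathcal T_{E_p}(A)$ be the $q$-Hermitian operator $B$ with $\frac{d}{dt}|_0\mathcal T_{E_p}(q(e^{tA}\cdot,\cdot))=q(B\cdot,\cdot)$. Then $$\frac{\dim\mathcal H_p}{\mathrm{Vol}(X,\nu)\mathrm{rk}(E)}D_q\mu^E(A)=A-D_q\mathcal T_{E_p}(A).$$
   Context: $X$ compact complex manifold, $L$ positive holomorphic Hermitian line bundle, $E$ holomorphic vector bundle, $\nu$ smooth positive measure, $\mathcal H_p=H^0(X,E\otimes L^p)$, $p$ large so that evaluations $s\mapsto s(x)$ are surjective. $\Pi_q(x)$: $q$-orthogonal projection with kernel $\{s:s(x)=0\}$; $\mathrm{FS}(q)(s_1(x),s_2(x))=q(\Pi_q(x)s_1,s_2)$; $\mathrm{Hilb}_{E_p}(h)=\frac{\dim\mathcal H_p}{\mathrm{Vol}(X,\nu)\mathrm{rk}(E)}\int_Xh\,d\nu$; $\mathcal T_{E_p}=\mathrm{Hilb}_{E_p}\circ\mathrm{FS}$; $q$ is $\nu$-balanced if $\mathcal T_{E_p}(q)=q$. $V_x\subset\mathcal H_p$ is the $q$-orthogonal complement of $\{s:s(x)=0\}$ (a $\mathrm{rk}(E)$-dimensional subspace, the image of $x$ under the Kodaira map to the Grassmannian), and for a subspace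 $W$, $\Pi_W$ denotes the $q$-orthogonal projection onto $W$ (so $\Pi_{V_x}=\Pi_q(x)$). The moment map is $\mu^E(G)=\int_X\Pi_{GV_x}d\nu(x)$ for $G\in\mathrm{GL}(\mathcal H_p)$. *)

theory Defs
  imports "HOL-Analysis.Analysis"
begin

text \<open>H_p is identified with complex^'n
(dim H_p = CARD('n)); the fibre of E (x) L^p at x is identified with complex^'r
(rk E = CARD('r)) via a measurable trivialisation; the evaluation map
s |-> s(x) is the matrix Ev x.\<close>

definition qform :: "complex^'n^'n \<Rightarrow> complex^'n \<Rightarrow> complex^'n \<Rightarrow> complex" where
  "qform Q u v = (\<Sum>i\<in>UNIV. (Q *v u) $ i * cnj (v $ i))"

definition is_prod :: "complex^'n^'n \<Rightarrow> bool" where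
  "is_prod Q \<longleftrightarrow> (\<forall>u v. qform Q u v = cnj (qform Q v u)) \<and>
                 (\<forall>v. v \<noteq> 0 \<longrightarrow> 0 < Re (qform Q v v))"

definition q_herm :: "complex^'n^'n \<Rightarrow> complex^'n^'n \<Rightarrow> bool" where
  "q_herm Q A \<longleftrightarrow> (\<forall>u v. qform Q (A *v u) v = qform Q u (A *v v))"

definition qproj :: "complex^'n^'n \<Rightarrow> (complex^'n) set \<Rightarrow> complex^'n^'n" where
  "qproj Q W = (THE P. \<forall>v. P *v v \<in> W \<and> (\<forall>w\<in>W. qform Q (v - P *v v) w = 0))"

definition ker_ev :: "('x \<Rightarrow> complex^'n^'r) \<Rightarrow> 'x \<Rightarrow> (complex^'n) set" where
  "ker_ev Ev x = {s. Ev x *v s = 0}"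

definition Vsp :: "complex^'n^'n \<Rightarrow> ('x \<Rightarrow> complex^'n^'r) \<Rightarrow> 'x \<Rightarrow> (complex^'n) set" where
  "Vsp Q Ev x = {v. \<forall>s\<in>ker_ev Ev x. qform Q s v = 0}"

text \<open>Fubini--Study metric FS(q) on the fibre at x:
  FS(q)(s1(x), s2(x)) = q(Pi_q(x) s1, s2), as a matrix on complex^'r.\<close>
definition FS :: "complex^'n^'n \<Rightarrow> ('x \<Rightarrow> complex^'n^'r) \<Rightarrow> 'x \<Rightarrow> complex^'r^'r" where
  "FS Q Ev x = (\<chi> i j. qform Q (qproj Q (Vsp Q Ev x) *v (SOME s. Ev x *v s = axis j 1))
                                  (SOME s. Ev x *v s = axis i 1))"

definition Hilb :: "'x measure \<Rightarrow> ('x \<Rightarrow> complex^'n^'r) \<Rightarrow> ('x \<Rightarrow> complex^'r^'r) \<Rightarrow> complex^'n^'n" where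
  "Hilb \<nu> Ev h = (real CARD('n) / (measure \<nu> (space \<nu>) * real CARD('r))) *\<^sub>R
     (\<chi> i j. integral\<^sup>L \<nu> (\<lambda>x. qform (h x) (Ev x *v axis j 1) (Ev x *v axis i 1)))"

definition Tmap :: "'x measure \<Rightarrow> ('x \<Rightarrow> complex^'n^'r) \<Rightarrow> complex^'n^'n \<Rightarrow> complex^'n^'n" where
  "Tmap \<nu> Ev Q = Hilb \<nu> Ev (FS Q Ev)"

definition balanced :: "'x measure \<Rightarrow> ('x \<Rightarrow> complex^'n^'r) \<Rightarrow> complex^'n^'n \<Rightarrow> bool" where
  "balanced \<nu> Ev Q \<longleftrightarrow> Tmap \<nu> Ev Q = Q"

definition mu :: "'x measure \<Rightarrow> complex^'n^'n \<Rightarrow> ('x \<Rightarrow> complex^'n^'r) \<Rightarrow> complex^'n^'n \<Rightarrow> complex^'n^'n" where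
  "mu \<nu> Q Ev G = integral\<^sup>L \<nu> (\<lambda>x. qproj Q ((\<lambda>v. G *v v) ` Vsp Q Ev x))"

primrec mpow :: "complex^'n^'n \<Rightarrow> nat \<Rightarrow> complex^'n^'n" where
  "mpow A 0 = mat 1"
| "mpow A (Suc k) = A ** mpow A k"

definition mexp :: "complex^'n^'n \<Rightarrow> complex^'n^'n" where
  "mexp A = (\<Sum>k. (1 / fact k) *\<^sub>R mpow A k)"

end

theory Submission
  imports Defs
begin

text \<open>Put \<open>F = exp (t A / 2)\<close> and \<open>c = dim H / (Vol rk E)\<close>. Writing the Fubini--Study
  metric through the \<open>q\<close>-orthogonal projections \<open>\<Pi>\<^sub>x\<close> onto the fibre spaces \<open>V\<^sub>x\<close>, the
  Hilbert map becomes \<open>T(q) = c \<integral> Q \<Pi>\<^sub>x\<close>. Since \<open>A\<close> is \<open>q\<close>-Hermitian,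
  \<open>q(exp (t A)\<cdot>, \<cdot>) = q(F\<cdot>, F\<cdot>)\<close>, whose fibre spaces are \<open>F\<^sup>-\<^sup>1\<close>-translates of the
  \<open>V\<^sub>x\<close>; hence \<open>T(q(exp (t A)\<cdot>, \<cdot>)) = c Q F \<mu>(F\<^sup>-\<^sup>1) F\<close>. At \<open>t = 0\<close> balancedness
  says \<open>c \<mu>(1) = 1\<close>, and the product rule at \<open>t = 0\<close> gives
  \<open>D T(A) = c (A/2 \<mu>(1) - D\<mu>(A) + \<mu>(1) A/2) = A - c D\<mu>(A)\<close>.\<close>

type_synonym 'n cmatrix = "complex^'n^'n"

section \<open>The matrix exponential\<close>

text \<open>Complex matrices embed, as real-linear operators, into a Banach algebra, whose
  library exponential provides the series, addition and derivative laws of \<open>mexp\<close>.\<close>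

typedef (overloaded) ('n::finite) linop = "UNIV :: ((complex^'n) \<Rightarrow>\<^sub>L (complex^'n)) set"
  morphisms linop_rep Linop by simp

setup_lifting type_definition_linop

instantiation linop :: (finite) real_normed_algebra_1
begin
lift_definition zero_linop :: "'n::finite linop" is "0::(complex^'n) \<Rightarrow>\<^sub>L (complex^'n)" .
lift_definition one_linop :: "'n::finite linop" is "id_blinfun::(complex^'n) \<Rightarrow>\<^sub>L (complex^'n)" .
lift_definition plus_linop :: "'n::finite linop \<Rightarrow> 'n linop \<Rightarrow> 'n linop"
  is "(+)::(complex^'n) \<Rightarrow>\<^sub>L (complex^'n) \<Rightarrow> _ \<Rightarrow> _" .
lift_definition minus_linop :: "'n::finite linop \<Rightarrow> 'n linop \<Rightarrow> 'n linop"
  is "(-)::(complex^'n) \<Rightarrow>\<^sub>L (complex^'n) \<Rightarrow> _ \<Rightarrow> _" .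
lift_definition uminus_linop :: "'n::finite linop \<Rightarrow> 'n linop"
  is "uminus::(complex^'n) \<Rightarrow>\<^sub>L (complex^'n) \<Rightarrow> _" .
lift_definition times_linop :: "'n::finite linop \<Rightarrow> 'n linop \<Rightarrow> 'n linop"
  is "(o\<^sub>L)::(complex^'n) \<Rightarrow>\<^sub>L (complex^'n) \<Rightarrow> _ \<Rightarrow> _" .
lift_definition scaleR_linop :: "real \<Rightarrow> 'n::finite linop \<Rightarrow> 'n linop"
  is "scaleR::real \<Rightarrow> (complex^'n) \<Rightarrow>\<^sub>L (complex^'n) \<Rightarrow> _" .
lift_definition norm_linop :: "'n::finite linop \<Rightarrow> real"
  is "norm::(complex^'n) \<Rightarrow>\<^sub>L (complex^'n) \<Rightarrow> real" .
definition dist_linop :: "'n::finite linop \<Rightarrow> 'n linop \<Rightarrow> real"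
  where "dist_linop a b = norm (a - b)"
definition sgn_linop :: "'n::finite linop \<Rightarrow> 'n linop"
  where "sgn_linop x = inverse (norm x) *\<^sub>R x"
definition uniformity_linop :: "('n::finite linop \<times> 'n linop) filter"
  where "uniformity_linop = (INF e\<in>{0<..}. principal {(x, y). dist x y < e})"
definition open_linop :: "'n::finite linop set \<Rightarrow> bool"
  where "open_linop S = (\<forall>x\<in>S. \<forall>\<^sub>F (x', y) in uniformity. x' = x \<longrightarrow> y \<in> S)"
instance
  apply standard
  unfolding dist_linop_def sgn_linop_def uniformity_linop_def open_linop_def
  subgoal by transfer (simp add: algebra_simps)
  subgoal by transfer (simp add: algebra_simps)
  subgoal by transfer (simp add: algebra_simps)
  subgoal by transfer (simp add: algebra_simps)
  subgoal by transfer (simp add: algebra_simps)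
  subgoal by transfer (simp add: algebra_simps)
  subgoal by transfer (simp add: algebra_simps)
  subgoal by transfer (simp add: algebra_simps)
  subgoal by transfer (simp add: algebra_simps)
  subgoal by transfer (auto intro!: blinfun_eqI)
  subgoal by transfer (auto intro!: blinfun_eqI simp: blinfun.bilinear_simps)
  subgoal by transfer (auto intro!: blinfun_eqI simp: blinfun.bilinear_simps)
  subgoal by transfer (auto intro!: blinfun_eqI simp: blinfun.bilinear_simps)
  subgoal by transfer (auto intro!: blinfun_eqI simp: blinfun.bilinear_simps)
  subgoal by transfer (auto intro!: blinfun_eqI)
  subgoal by transfer (auto intro!: blinfun_eqI)
  subgoal by transfer (metis norm_blinfun_id norm_zero zero_neq_one)
  subgoal by (rule refl)
  subgoal by (rule refl)
  subgoal by (rule refl)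
  subgoal by (rule refl)
  subgoal by transfer simp
  subgoal by transfer (rule norm_triangle_ineq)
  subgoal by transfer simp
  subgoal by transfer (rule norm_blinfun_compose)
  subgoal by transfer simp
  done
end

lemma dist_linop_rep: "dist a b = dist (linop_rep a) (linop_rep b)"
  by (simp add: dist_linop_def dist_norm norm_linop.rep_eq minus_linop.rep_eq)

instance linop :: (finite) banach
proof
  fix X :: "nat \<Rightarrow> 'n::finite linop"
  assume "Cauchy X"
  then have "Cauchy (\<lambda>n. linop_rep (X n))"
    by (simp add: Cauchy_def dist_linop_rep)
  then obtain L where "(\<lambda>n. linop_rep (X n)) \<longlonglongrightarrow> L"
    using Cauchy_convergent_iff convergent_def by blast
  then have "X \<longlonglongrightarrow> Linop L"
    unfolding lim_sequentially by (simp add: dist_linop_rep Linop_inverse)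
  then show "convergent X"
    by (auto simp: convergent_def)
qed

lemma norm_vec_le_sum_norm: "norm (x::'a::real_normed_vector^'n) \<le> (\<Sum>i\<in>UNIV. norm (x $ i))"
  by (simp add: norm_vec_def L2_set_le_sum)

lemma scaleR_conv_complex_mult: "r *\<^sub>R (z::complex) = of_real r * z"
  by (simp add: scaleR_conv_of_real)

lemma scaleR_matrix_vector_mult: "(r *\<^sub>R (A::complex^'n^'m)) *v v = r *\<^sub>R (A *v v)"
  by (simp add: vec_eq_iff matrix_vector_mult_def sum_distrib_left scaleR_conv_complex_mult
      algebra_simps)

lemma bounded_linear_matrix_vector_mult: "bounded_linear (\<lambda>v. (A::complex^'n^'m) *v v)"
proof -
  have "linear (\<lambda>v. A *v v)"
    by (rule linearI) (simp_all add: vec_eq_iff matrix_vector_mult_def sum.distrib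
        sum_distrib_left scaleR_conv_complex_mult algebra_simps)
  then show ?thesis
    using linear_conv_bounded_linear by blast
qed

lemma matrix_vector_mult_axis: "((A::'a::semiring_1^'n^'m) *v axis j 1) $ i = A $ i $ j"
  by (simp add: matrix_vector_mult_def axis_def if_distrib cong: if_cong)

definition mat_linop :: "'n cmatrix \<Rightarrow> 'n::finite linop"
  where "mat_linop A = Linop (Blinfun (\<lambda>v. A *v v))"

definition linop_mat :: "'n::finite linop \<Rightarrow> 'n cmatrix"
  where "linop_mat M = (\<chi> i j. linop_rep M (axis j 1) $ i)"

lemma linop_rep_mat_linop: "linop_rep (mat_linop A) v = A *v v"
  by (simp add: mat_linop_def Linop_inverse bounded_linear_Blinfun_apply
      bounded_linear_matrix_vector_mult)

lemma mat_linop_eqI: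
  assumes "\<And>v. linop_rep M v = A *v v"
  shows "mat_linop A = M"
proof (rule linop_rep_inject[THEN iffD1], rule blinfun_eqI)
  show "linop_rep (mat_linop A) v = linop_rep M v" for v
    by (simp add: assms linop_rep_mat_linop)
qed

lemma linop_mat_mat_linop [simp]: "linop_mat (mat_linop A) = A"
  by (simp add: linop_mat_def linop_rep_mat_linop matrix_vector_mult_axis vec_eq_iff)

lemma inj_mat_linop: "inj mat_linop"
  by (metis injI linop_mat_mat_linop)

lemma mat_linop_mult: "mat_linop (A ** B) = mat_linop A * mat_linop B"
  by (rule mat_linop_eqI) (simp add: linop_rep_mat_linop times_linop.rep_eq matrix_vector_mul_assoc)

lemma mat_linop_one: "mat_linop (mat 1) = 1"
  by (rule mat_linop_eqI) (simp add: one_linop.rep_eq)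

lemma mat_linop_zero: "mat_linop 0 = 0"
  by (rule mat_linop_eqI) (simp add: zero_linop.rep_eq)

lemma mat_linop_add: "mat_linop (A + B) = mat_linop A + mat_linop B"
  by (rule mat_linop_eqI)
    (simp add: linop_rep_mat_linop plus_linop.rep_eq plus_blinfun.rep_eq
      matrix_vector_mult_add_rdistrib)

lemma mat_linop_scaleR: "mat_linop (r *\<^sub>R A) = r *\<^sub>R mat_linop A"
  by (rule mat_linop_eqI)
    (simp add: linop_rep_mat_linop scaleR_linop.rep_eq scaleR_blinfun.rep_eq
      scaleR_matrix_vector_mult)

lemma mat_linop_mpow: "mat_linop (mpow A k) = mat_linop A ^ k"
  by (induct k) (simp_all add: mat_linop_one mat_linop_mult)

lemma bounded_linear_mat_linop: "bounded_linear (mat_linop :: 'n cmatrix \<Rightarrow> 'n::finite linop)"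
  by (simp add: linear_conv_bounded_linear[symmetric] linearI mat_linop_add mat_linop_scaleR)

lemma bounded_linear_linop_mat: "bounded_linear (linop_mat :: 'n::finite linop \<Rightarrow> 'n cmatrix)"
proof (rule bounded_linear_intro[where K = "real CARD('n) * real CARD('n)"])
  fix M N :: "'n linop" and r :: real
  show "linop_mat (M + N) = linop_mat M + linop_mat N"
    by (simp add: linop_mat_def plus_linop.rep_eq vec_eq_iff blinfun.bilinear_simps)
  show "linop_mat (r *\<^sub>R M) = r *\<^sub>R linop_mat M"
    by (simp add: linop_mat_def scaleR_linop.rep_eq scaleR_blinfun.rep_eq vec_eq_iff)
  have entry: "norm (linop_mat M $ i $ j) \<le> norm M" for i j
  proof -
    have "norm (linop_mat M $ i $ j) \<le> norm (linop_rep M (axis j (1::complex)))"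
      unfolding linop_mat_def by (simp add: Finite_Cartesian_Product.norm_nth_le)
    also have "\<dots> \<le> norm (linop_rep M) * norm (axis j (1::complex))"
      by (rule norm_blinfun)
    finally show ?thesis
      by (simp add: norm_linop.rep_eq)
  qed
  have "norm (linop_mat M) \<le> (\<Sum>i\<in>UNIV. \<Sum>j\<in>UNIV. norm (linop_mat M $ i $ j))"
    using norm_vec_le_sum_norm[of "linop_mat M"] sum_mono[OF norm_vec_le_sum_norm]
    by (rule order_trans)
  also have "\<dots> \<le> (\<Sum>i\<in>(UNIV::'n set). \<Sum>j\<in>(UNIV::'n set). norm M)"
    by (intro sum_mono entry)
  finally show "norm (linop_mat M) \<le> norm M * (real CARD('n) * real CARD('n))"
    by (simp add: mult_ac)
qed

lemma mexp_sums: "(\<lambda>k. (1 / fact k) *\<^sub>R mpow A k) sums mexp A"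
  and mat_linop_mexp: "mat_linop (mexp A) = exp (mat_linop A)"
proof -
  have term_eq: "mat_linop ((1 / fact k) *\<^sub>R mpow A k) = mat_linop A ^ k /\<^sub>R fact k" for k
    by (simp add: mat_linop_mpow mat_linop_scaleR divide_inverse)
  have "(\<lambda>k. linop_mat (mat_linop ((1 / fact k) *\<^sub>R mpow A k))) sums linop_mat (exp (mat_linop A))"
    unfolding term_eq by (rule bounded_linear.sums[OF bounded_linear_linop_mat exp_converges])
  then have sums: "(\<lambda>k. (1 / fact k) *\<^sub>R mpow A k) sums linop_mat (exp (mat_linop A))"
    by simp
  then show mexp_sums: "(\<lambda>k. (1 / fact k) *\<^sub>R mpow A k) sums mexp A"
    by (simp add: mexp_def sums_unique[OF sums, symmetric])
  have "(\<lambda>k. mat_linop ((1 / fact k) *\<^sub>R mpow A k)) sums mat_linop (mexp A)"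
    by (rule bounded_linear.sums[OF bounded_linear_mat_linop mexp_sums])
  then have "(\<lambda>k. mat_linop A ^ k /\<^sub>R fact k) sums mat_linop (mexp A)"
    by (simp only: term_eq)
  then show "mat_linop (mexp A) = exp (mat_linop A)"
    using exp_converges sums_unique2 by blast
qed

lemma mexp_add_scaleR: "mexp (a *\<^sub>R A) ** mexp (b *\<^sub>R A) = mexp ((a + b) *\<^sub>R A)"
proof (rule injD[OF inj_mat_linop])
  have commute: "a *\<^sub>R mat_linop A * (b *\<^sub>R mat_linop A) = b *\<^sub>R mat_linop A * (a *\<^sub>R mat_linop A)"
    by (simp add: mult_scaleR_left mult_scaleR_right)
  have "mat_linop (mexp (a *\<^sub>R A) ** mexp (b *\<^sub>R A)) = exp (a *\<^sub>R mat_linop A) * exp (b *\<^sub>R mat_linop A)"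
    by (simp only: mat_linop_mult mat_linop_mexp mat_linop_scaleR)
  also have "\<dots> = exp (a *\<^sub>R mat_linop A + b *\<^sub>R mat_linop A)"
    by (rule exp_add_commuting[OF commute, symmetric])
  also have "\<dots> = mat_linop (mexp ((a + b) *\<^sub>R A))"
    by (simp only: mat_linop_mexp mat_linop_scaleR scaleR_add_left mat_linop_add)
  finally show "mat_linop (mexp (a *\<^sub>R A) ** mexp (b *\<^sub>R A)) = mat_linop (mexp ((a + b) *\<^sub>R A))" .
qed

lemma mexp_zero: "mexp 0 = mat 1"
  by (rule injD[OF inj_mat_linop]) (simp add: mat_linop_mexp mat_linop_one mat_linop_zero)

lemma has_vector_derivative_mexp: "((\<lambda>t. mexp (t *\<^sub>R A)) has_vector_derivative A) (at 0)"
proof -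
  have "((\<lambda>t. linop_mat (exp (t *\<^sub>R mat_linop A))) has_vector_derivative
      linop_mat (exp (0 *\<^sub>R mat_linop A) * mat_linop A)) (at 0)"
    by (rule bounded_linear.has_vector_derivative[OF bounded_linear_linop_mat
          exp_scaleR_has_vector_derivative_right])
  then show ?thesis
    by (simp add: mat_linop_mexp[symmetric] mat_linop_scaleR[symmetric] mexp_zero mat_linop_one)
qed

section \<open>Hermitian inner product and adjoint\<close>

definition hadjoint :: "complex^'n^'m \<Rightarrow> complex^'m^'n"
  where "hadjoint M = (\<chi> i j. cnj (M $ j $ i))"

definition cinner :: "complex^'n \<Rightarrow> complex^'n \<Rightarrow> complex"
  where "cinner u v = (\<Sum>i\<in>UNIV. u $ i * cnj (v $ i))"

lemma qform_eq_cinner: "qform Q u v = cinner (Q *v u) v"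
  by (simp add: qform_def cinner_def)

lemma cinner_matrix_vector_left: "cinner (M *v u) v = cinner u (hadjoint M *v v)"
proof -
  have "cinner (M *v u) v = (\<Sum>i\<in>UNIV. \<Sum>j\<in>UNIV. M $ i $ j * u $ j * cnj (v $ i))"
    by (simp add: cinner_def matrix_vector_mult_def sum_distrib_right)
  also have "\<dots> = (\<Sum>j\<in>UNIV. \<Sum>i\<in>UNIV. M $ i $ j * u $ j * cnj (v $ i))"
    by (rule sum.swap)
  also have "\<dots> = cinner u (hadjoint M *v v)"
    by (simp add: cinner_def matrix_vector_mult_def hadjoint_def sum_distrib_left mult_ac)
  finally show ?thesis .
qed

lemma hadjoint_hadjoint [simp]: "hadjoint (hadjoint A) = A"
  by (simp add: hadjoint_def vec_eq_iff)

lemma cinner_matrix_vector_right: "cinner u (M *v v) = cinner (hadjoint M *v u) v"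
  using cinner_matrix_vector_left[of "hadjoint M" u v] by simp

lemma cinner_axis: "cinner w (axis i 1) = w $ i"
  by (simp add: cinner_def axis_def if_distrib cong: if_cong)

lemma cinner_add_left: "cinner (u + w) v = cinner u v + cinner w v"
  by (simp add: cinner_def algebra_simps sum.distrib)

lemma cinner_add_right: "cinner u (v + w) = cinner u v + cinner u w"
  by (simp add: cinner_def algebra_simps sum.distrib)

lemma cinner_diff_left: "cinner (u - w) v = cinner u v - cinner w v"
  by (simp add: cinner_def algebra_simps sum_subtractf)

lemma cinner_diff_right: "cinner u (v - w) = cinner u v - cinner u w"
  by (simp add: cinner_def algebra_simps sum_subtractf)

lemma cinner_scaleC_left: "cinner (c *s u) v = c * cinner u v"
  by (simp add: cinner_def sum_distrib_left mult_ac)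

lemma cinner_scaleC_right: "cinner u (c *s v) = cnj c * cinner u v"
  by (simp add: cinner_def sum_distrib_left mult_ac)

lemma cinner_commute: "cnj (cinner u v) = cinner v u"
  by (simp add: cinner_def mult_ac)

lemma cinner_zero_left [simp]: "cinner 0 v = 0"
  by (simp add: cinner_def)

lemma cinner_zero_right [simp]: "cinner u 0 = 0"
  by (simp add: cinner_def)

lemma cinner_self_eq_0: "cinner u u = 0 \<longleftrightarrow> u = 0"
proof
  assume "cinner u u = 0"
  then have "(\<Sum>i\<in>UNIV. complex_of_real ((cmod (u $ i))\<^sup>2)) = 0"
    unfolding cinner_def by (simp only: complex_norm_square)
  then have "(\<Sum>i\<in>UNIV. (cmod (u $ i))\<^sup>2) = 0"
    by (simp only: of_real_sum[symmetric] of_real_eq_0_iff)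
  then show "u = 0"
    by (simp add: sum_nonneg_eq_0_iff vec_eq_iff)
qed simp

lemma matrix_eq_cinnerI: "(\<And>u v. cinner (A *v u) v = cinner (B *v u) v) \<Longrightarrow> A = B"
  by (metis cinner_axis matrix_vector_mult_axis vec_eq_iff)

lemma hadjoint_mult: "hadjoint (A ** B) = hadjoint B ** hadjoint A"
  by (simp add: hadjoint_def matrix_matrix_mult_def vec_eq_iff mult.commute)

lemma hadjoint_mat_one [simp]: "hadjoint (mat 1) = mat 1"
  by (simp add: hadjoint_def mat_def vec_eq_iff)

lemma bounded_linear_hadjoint: "bounded_linear (hadjoint :: complex^'n^'m \<Rightarrow> _)"
proof -
  have "linear (hadjoint :: complex^'n^'m \<Rightarrow> _)"
    by (rule linearI) (simp_all add: hadjoint_def vec_eq_iff scaleR_conv_complex_mult)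
  then show ?thesis
    using linear_conv_bounded_linear by blast
qed

lemma hadjoint_scaleR: "hadjoint (r *\<^sub>R A) = r *\<^sub>R hadjoint A"
  by (simp add: hadjoint_def vec_eq_iff scaleR_conv_complex_mult)

lemma matrix_add_rdistrib: "(B + C) ** (A::'a::semiring_1^'k^'n) = B ** A + C ** A"
  by (vector matrix_matrix_mult_def sum.distrib[symmetric] field_simps)

lemma bounded_bilinear_matrix_mult:
  "bounded_bilinear (\<lambda>(A::complex^'n^'m) (B::complex^'k^'n). A ** B)"
proof -
  have "bilinear (\<lambda>(A::complex^'n^'m) (B::complex^'k^'n). A ** B)"
    unfolding bilinear_def
    by (auto intro!: linearI simp: matrix_add_ldistrib matrix_add_rdistrib matrix_scalar_ac
        scalar_matrix_assoc)
  then show ?thesis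
    using bilinear_conv_bounded_bilinear by blast
qed

lemmas bounded_linear_matrix_mult_left =
  bounded_bilinear.bounded_linear_right[OF bounded_bilinear_matrix_mult]
lemmas bounded_linear_matrix_mult_right =
  bounded_bilinear.bounded_linear_left[OF bounded_bilinear_matrix_mult]

section \<open>Positive Hermitian forms\<close>

definition pos_herm :: "'n::finite cmatrix \<Rightarrow> bool"
  where "pos_herm Q \<longleftrightarrow> hadjoint Q = Q \<and> (\<forall>v. v \<noteq> 0 \<longrightarrow> 0 < Re (cinner (Q *v v) v))"

lemma pos_herm_cinner_pos: "pos_herm Q \<Longrightarrow> v \<noteq> 0 \<Longrightarrow> 0 < Re (cinner (Q *v v) v)"
  by (simp add: pos_herm_def)

lemma pos_herm_cinner_nonneg: "pos_herm Q \<Longrightarrow> 0 \<le> Re (cinner (Q *v v) v)"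
  by (cases "v = 0") (auto dest: pos_herm_cinner_pos[of Q v])

lemma pos_herm_cinner_eq_0:
  assumes "pos_herm Q" and "cinner (Q *v v) v = 0"
  shows "v = 0"
proof (rule ccontr)
  assume "v \<noteq> 0"
  then have "0 < Re (cinner (Q *v v) v)"
    by (rule pos_herm_cinner_pos[OF assms(1)])
  with assms(2) show False
    by simp
qed

lemma pos_herm_cinner_commute: "pos_herm Q \<Longrightarrow> cinner (Q *v u) v = cnj (cinner (Q *v v) u)"
  by (simp add: pos_herm_def cinner_matrix_vector_left cinner_commute)

lemma is_prod_imp_pos_herm:
  assumes "is_prod Q"
  shows "pos_herm Q"
proof -
  have sym: "qform Q u v = cnj (qform Q v u)" for u v
    using assms unfolding is_prod_def by blast
  have "cnj (Q $ j $ i) = Q $ i $ j" for i j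
    using sym[of "axis j 1" "axis i 1"]
    by (simp add: qform_eq_cinner cinner_axis matrix_vector_mult_axis)
  then have "hadjoint Q = Q"
    by (simp add: hadjoint_def vec_eq_iff)
  moreover have "\<forall>v. v \<noteq> 0 \<longrightarrow> 0 < Re (cinner (Q *v v) v)"
    using assms unfolding is_prod_def qform_eq_cinner by blast
  ultimately show ?thesis
    by (simp add: pos_herm_def)
qed

lemma pos_herm_left_inverse:
  assumes "pos_herm Q"
  obtains Qi where "Qi ** Q = mat 1"
proof -
  have "\<forall>v. Q *v v = 0 \<longrightarrow> v = 0"
    using pos_herm_cinner_eq_0[OF assms] by auto
  then have "\<exists>Qi. Qi ** Q = mat 1"
    by (simp only: matrix_left_invertible_ker)
  then show ?thesis
    using that by blast
qed

lemma q_herm_iff: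
  assumes "hadjoint Q = Q"
  shows "q_herm Q A \<longleftrightarrow> Q ** A = hadjoint A ** Q"
proof -
  have "qform Q (A *v u) v = cinner ((Q ** A) *v u) v"
    and "qform Q u (A *v v) = cinner ((hadjoint A ** Q) *v u) v" for u v
    by (simp_all add: qform_eq_cinner matrix_vector_mul_assoc cinner_matrix_vector_right)
  note eqs = this
  show ?thesis
  proof
    assume "q_herm Q A"
    then have "cinner ((Q ** A) *v u) v = cinner ((hadjoint A ** Q) *v u) v" for u v
      using eqs unfolding q_herm_def by simp
    then show "Q ** A = hadjoint A ** Q"
      by (rule matrix_eq_cinnerI)
  next
    assume "Q ** A = hadjoint A ** Q"
    then show "q_herm Q A"
      using eqs unfolding q_herm_def by simp
  qed
qed

lemma mpow_commute: "A ** mpow A k = mpow A k ** A"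
  by (induct k) (simp_all add: matrix_mul_assoc)

lemma q_herm_mpow:
  assumes "Q ** A = hadjoint A ** Q"
  shows "Q ** mpow A k = hadjoint (mpow A k) ** Q"
proof (induct k)
  case (Suc k)
  have "Q ** mpow A (Suc k) = hadjoint A ** (Q ** mpow A k)"
    by (simp add: assms matrix_mul_assoc)
  also have "\<dots> = hadjoint (mpow A k ** A) ** Q"
    by (simp add: Suc hadjoint_mult matrix_mul_assoc)
  finally show ?case
    by (simp only: mpow.simps mpow_commute)
qed simp

lemma q_herm_mexp:
  assumes "Q ** A = hadjoint A ** Q"
  shows "Q ** mexp A = hadjoint (mexp A) ** Q"
proof -
  have "(\<lambda>k. Q ** ((1 / fact k) *\<^sub>R mpow A k)) sums (Q ** mexp A)"
    by (rule bounded_linear.sums[OF bounded_linear_matrix_mult_left mexp_sums])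
  moreover have "(\<lambda>k. hadjoint ((1 / fact k) *\<^sub>R mpow A k) ** Q) sums (hadjoint (mexp A) ** Q)"
    by (rule bounded_linear.sums[OF bounded_linear_compose[OF bounded_linear_matrix_mult_right
          bounded_linear_hadjoint] mexp_sums])
  moreover have "Q ** ((1 / fact k) *\<^sub>R mpow A k) = hadjoint ((1 / fact k) *\<^sub>R mpow A k) ** Q" for k
    by (simp add: matrix_scalar_ac scalar_matrix_assoc[symmetric] hadjoint_scaleR
        q_herm_mpow[OF assms])
  ultimately show ?thesis
    by (simp add: sums_unique2)
qed

section \<open>Orthogonal projections onto the fibre spaces\<close>

text \<open>An explicit inverse (rather than \<open>matrix_inv\<close>, defined by choice), so that
  measurability in the base point is evident.\<close>

definition cramer_inv :: "'r::finite cmatrix \<Rightarrow> 'r cmatrix"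
  where "cramer_inv M = (\<chi> k j. det (\<chi> a b. if b = k then axis j 1 $ a else M $ a $ b) / det M)"

lemma matrix_mul_cramer_inv:
  assumes "det M \<noteq> 0"
  shows "M ** cramer_inv M = mat 1"
proof -
  have column: "M *v (\<chi> k. cramer_inv M $ k $ j) = axis j 1" for j
    unfolding cramer_inv_def vec_lambda_beta by (rule cramer[OF assms, THEN iffD2, OF refl])
  have "(M ** cramer_inv M) $ i $ j = (M *v (\<chi> k. cramer_inv M $ k $ j)) $ i" for i j
    by (simp add: matrix_matrix_mult_def matrix_vector_mult_def)
  then show ?thesis
    by (simp add: vec_eq_iff column axis_def mat_def)
qed

definition is_qproj :: "'n::finite cmatrix \<Rightarrow> (complex^'n) set \<Rightarrow> 'n cmatrix \<Rightarrow> bool"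
  where "is_qproj Q W P \<longleftrightarrow> (\<forall>v. P *v v \<in> W \<and> (\<forall>w\<in>W. qform Q (v - P *v v) w = 0))"

lemma qproj_eqI:
  assumes Q: "pos_herm Q" and W: "\<And>a b. a \<in> W \<Longrightarrow> b \<in> W \<Longrightarrow> a - b \<in> W"
    and P: "is_qproj Q W P"
  shows "qproj Q W = P"
  unfolding qproj_def
proof (rule the_equality)
  show "\<forall>v. P *v v \<in> W \<and> (\<forall>w\<in>W. qform Q (v - P *v v) w = 0)"
    using P by (simp add: is_qproj_def)
next
  fix P' assume P': "\<forall>v. P' *v v \<in> W \<and> (\<forall>w\<in>W. qform Q (v - P' *v v) w = 0)"
  have "P' *v v = P *v v" for v
  proof -
    define z where "z = P' *v v - P *v v"
    have "z \<in> W"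
      using W P P' by (simp add: z_def is_qproj_def)
    then have "qform Q (v - P *v v) z = 0" "qform Q (v - P' *v v) z = 0"
      using P P' by (simp_all add: is_qproj_def)
    moreover have "qform Q z z = qform Q (v - P *v v) z - qform Q (v - P' *v v) z"
      by (simp add: z_def qform_eq_cinner matrix_vector_mult_diff_distrib cinner_diff_left)
    ultimately have "cinner (Q *v z) z = 0"
      by (simp add: qform_eq_cinner)
    then have "z = 0"
      by (rule pos_herm_cinner_eq_0[OF Q])
    then show ?thesis
      by (simp add: z_def)
  qed
  then show "P' = P"
    by (simp add: matrix_eq)
qed

lemma Vsp_diff: "a \<in> Vsp Q Ev x \<Longrightarrow> b \<in> Vsp Q Ev x \<Longrightarrow> a - b \<in> Vsp Q Ev x"
  by (simp add: Vsp_def qform_eq_cinner cinner_diff_right)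

lemma pos_herm_inverse:
  assumes "pos_herm Q" and "Qi ** Q = mat 1"
  shows "Q ** Qi = mat 1" and "hadjoint Qi = Qi"
proof -
  show QQi: "Q ** Qi = mat 1"
    using assms(2) matrix_left_right_inverse by blast
  have "hadjoint Qi = (hadjoint Qi ** hadjoint Q) ** Qi"
    using assms(1) by (simp add: pos_herm_def QQi flip: matrix_mul_assoc)
  also have "\<dots> = Qi"
    by (simp add: QQi flip: hadjoint_mult)
  finally show "hadjoint Qi = Qi" .
qed

definition fibre_proj :: "'n::finite cmatrix \<Rightarrow> complex^'n^'r::finite \<Rightarrow> 'n cmatrix"
  where "fibre_proj Qi E = Qi ** hadjoint E ** cramer_inv (E ** Qi ** hadjoint E) ** E"

lemma det_fibre_gram_nonzero:
  fixes E :: "complex^'n^'r"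
  assumes Q: "pos_herm Q" "Qi ** Q = mat 1" and surj: "\<forall>e. \<exists>s. E *v s = e"
  shows "det (E ** Qi ** hadjoint E) \<noteq> 0"
proof -
  have "y = 0" if y: "(E ** Qi ** hadjoint E) *v y = 0" for y
  proof -
    define z where "z = hadjoint E *v y"
    define w where "w = Qi *v z"
    have z: "z = Q *v w"
      using pos_herm_inverse(1)[OF Q] by (simp add: w_def matrix_vector_mul_assoc)
    have "cinner w z = cinner (E *v w) y"
      by (simp add: z_def cinner_matrix_vector_left)
    also have "\<dots> = 0"
      using y by (simp add: w_def z_def matrix_vector_mul_assoc matrix_mul_assoc)
    finally have "cinner w (Q *v w) = 0"
      using z by simp
    then have "cinner (Q *v w) w = 0"
      using cinner_commute[of w "Q *v w"] by simp
    then have "w = 0"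
      by (rule pos_herm_cinner_eq_0[OF Q(1)])
    then have "z = 0"
      using z by simp
    moreover obtain s where "E *v s = y"
      using surj by blast
    then have "cinner y y = cinner s z"
      using cinner_matrix_vector_left[of E s y] by (simp add: z_def)
    ultimately have "cinner y y = 0"
      by simp
    then show "y = 0"
      by (simp add: cinner_self_eq_0)
  qed
  then obtain B where "B ** (E ** Qi ** hadjoint E) = mat 1"
    using matrix_left_invertible_ker by blast
  then show ?thesis
    using invertible_det_nz invertible_left_inverse by blast
qed

lemma is_qproj_fibre_proj:
  assumes Q: "pos_herm Q" "Qi ** Q = mat 1" and surj: "\<forall>e. \<exists>s. Ev x *v s = e"
  shows "is_qproj Q (Vsp Q Ev x) (fibre_proj Qi (Ev x))"
  unfolding is_qproj_def
proof (intro allI conjI ballI)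
  fix v
  define E where "E = Ev x"
  define y where "y = cramer_inv (E ** Qi ** hadjoint E) *v (E *v v)"
  have Pv: "fibre_proj Qi E *v v = Qi *v (hadjoint E *v y)"
    by (simp add: fibre_proj_def y_def matrix_vector_mul_assoc matrix_mul_assoc)
  show "fibre_proj Qi (Ev x) *v v \<in> Vsp Q Ev x"
    unfolding Vsp_def ker_ev_def
  proof (intro CollectI ballI)
    fix s assume "s \<in> {s. Ev x *v s = 0}"
    then have Es: "E *v s = 0"
      by (simp add: E_def)
    have "qform Q s (fibre_proj Qi E *v v) = cinner (hadjoint Qi *v (Q *v s)) (hadjoint E *v y)"
      by (simp only: qform_eq_cinner Pv cinner_matrix_vector_right)
    also have "\<dots> = cinner (E *v s) y"
      using pos_herm_inverse[OF Q] Q(2)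
      by (simp add: matrix_vector_mul_assoc cinner_matrix_vector_left)
    finally show "qform Q s (fibre_proj Qi (Ev x) *v v) = 0"
      using Es by (simp add: E_def)
  qed
  have "E ** fibre_proj Qi E = E"
    using matrix_mul_cramer_inv[OF det_fibre_gram_nonzero[OF Q surj]]
    by (simp add: fibre_proj_def E_def matrix_mul_assoc)
  then have "E *v (v - fibre_proj Qi E *v v) = 0"
    by (simp add: matrix_vector_mult_diff_distrib matrix_vector_mul_assoc)
  then show "qform Q (v - fibre_proj Qi (Ev x) *v v) w = 0" if "w \<in> Vsp Q Ev x" for w
    using that by (simp add: Vsp_def ker_ev_def E_def)
qed

lemma qproj_Vsp:
  assumes "pos_herm Q" "Qi ** Q = mat 1" and "\<forall>e. \<exists>s. Ev x *v s = e"
  shows "qproj Q (Vsp Q Ev x) = fibre_proj Qi (Ev x)"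
  using assms by (intro qproj_eqI Vsp_diff is_qproj_fibre_proj)

lemma mult_fibre_proj:
  assumes "pos_herm Q" "Qi ** Q = mat 1"
  shows "Q ** fibre_proj Qi E = hadjoint E ** cramer_inv (E ** Qi ** hadjoint E) ** E"
  using pos_herm_inverse[OF assms] by (simp add: fibre_proj_def matrix_mul_assoc)

lemma FS_eq_cramer_inv:
  assumes Q: "pos_herm Q" "Qi ** Q = mat 1" and surj: "\<forall>e. \<exists>s. Ev x *v s = e"
  shows "FS Q Ev x = cramer_inv (Ev x ** Qi ** hadjoint (Ev x))"
proof -
  define E where "E = Ev x"
  define R where "R = cramer_inv (E ** Qi ** hadjoint E)"
  have sE: "E *v (SOME s. E *v s = axis b 1) = axis b 1" for b
  proof (rule someI_ex)
    show "\<exists>s. E *v s = axis b 1"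
      using surj by (simp add: E_def)
  qed
  have "FS Q Ev x $ a $ b = R $ a $ b" for a b
  proof -
    let ?sa = "SOME s. E *v s = axis a 1" and ?sb = "SOME s. E *v s = axis b 1"
    have "FS Q Ev x $ a $ b = cinner ((Q ** fibre_proj Qi E) *v ?sb) ?sa"
      using qproj_Vsp[where Ev=Ev and x=x, OF Q surj]
      by (simp add: FS_def qform_eq_cinner E_def matrix_vector_mul_assoc)
    also have "\<dots> = cinner (hadjoint E *v (R *v (E *v ?sb))) ?sa"
      by (simp only: mult_fibre_proj[OF Q] R_def matrix_vector_mul_assoc matrix_mul_assoc)
    also have "\<dots> = cinner (R *v (E *v ?sb)) (E *v ?sa)"
      by (simp add: cinner_matrix_vector_left)
    also have "\<dots> = cinner (R *v axis b 1) (axis a 1)"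
      by (simp only: sE)
    finally show ?thesis
      by (simp add: cinner_axis matrix_vector_mult_axis)
  qed
  then show ?thesis
    by (simp add: vec_eq_iff R_def E_def)
qed

lemma Hilb_integrand_FS:
  assumes Q: "pos_herm Q" "Qi ** Q = mat 1" and surj: "\<forall>e. \<exists>s. Ev x *v s = e"
  shows "qform (FS Q Ev x) (Ev x *v axis j 1) (Ev x *v axis i 1)
       = (Q ** qproj Q (Vsp Q Ev x)) $ i $ j"
  using FS_eq_cramer_inv[where Ev=Ev and x=x, OF Q surj] qproj_Vsp[where Ev=Ev and x=x, OF Q surj]
    mult_fibre_proj[OF Q, of "Ev x"]
  by (simp add: qform_eq_cinner cinner_matrix_vector_right cinner_axis
      matrix_vector_mul_assoc matrix_vector_mult_axis matrix_mul_assoc)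

section \<open>The Hilbert map as an integral of projections\<close>

lemma pos_herm_cinner_expand:
  assumes "pos_herm Q"
  shows "cinner (Q *v (u + c *s v)) (u + c *s v) = cinner (Q *v u) u + (c * cnj c) * cinner (Q *v v) v
          + cnj c * cinner (Q *v u) v + c * cnj (cinner (Q *v u) v)"
proof -
  have "cinner (Q *v v) u = cnj (cinner (Q *v u) v)"
    using pos_herm_cinner_commute[OF assms, of v u] by simp
  then show ?thesis
    by (simp add: matrix_vector_right_distrib vector_scalar_commute cinner_add_left
        cinner_add_right cinner_scaleC_left cinner_scaleC_right algebra_simps)
qed

lemma pos_herm_cinner_bound:
  assumes "pos_herm Q"
  shows "cmod (cinner (Q *v u) v) \<le> Re (cinner (Q *v u) u) + Re (cinner (Q *v v) v)"
proof -
  define z where "z = cinner (Q *v u) v"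
  define a where "a = Re (cinner (Q *v u) u)"
  define b where "b = Re (cinner (Q *v v) v)"
  have nonneg: "0 \<le> Re (cinner (Q *v (u + c *s v)) (u + c *s v))" for c
    by (rule pos_herm_cinner_nonneg[OF assms])
  have expand: "Re (cinner (Q *v (u + c *s v)) (u + c *s v))
      = a + Re (c * cnj c) * b + Re (cnj c * z + c * cnj z)" if "Im (c * cnj c) = 0" for c
    using that by (simp add: pos_herm_cinner_expand[OF assms] a_def b_def z_def)
  have "0 \<le> a + b + 2 * Re z" "0 \<le> a + b - 2 * Re z"
    "0 \<le> a + b + 2 * Im z" "0 \<le> a + b - 2 * Im z"
    using nonneg[of 1] expand[of 1] nonneg[of "-1"] expand[of "-1"]
      nonneg[of \<i>] expand[of \<i>] nonneg[of "-\<i>"] expand[of "-\<i>"]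
    by simp_all
  then have "\<bar>Re z\<bar> + \<bar>Im z\<bar> \<le> a + b"
    by linarith
  then show ?thesis
    using cmod_le[of z] by (simp add: z_def a_def b_def)
qed

text \<open>A \<open>q\<close>-orthogonal projection does not increase \<open>q\<close>-lengths; this bounds \<open>Q P\<close>
  independently of the subspace, whence the integrability in the Hilbert map.\<close>

lemma is_qproj_cinner_bound:
  assumes Q: "pos_herm Q" and P: "is_qproj Q W P"
  shows "cmod (cinner (Q *v (P *v a)) b) \<le> Re (cinner (Q *v a) a) + Re (cinner (Q *v b) b)"
proof -
  have orth: "cinner (Q *v (P *v a)) (v - P *v v) = 0" for a v
    using P pos_herm_cinner_commute[OF Q, of "P *v a" "v - P *v v"]
    by (simp add: is_qproj_def qform_eq_cinner)
  have shrink: "Re (cinner (Q *v (P *v v)) (P *v v)) \<le> Re (cinner (Q *v v) v)" for v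
  proof -
    define d where "d = v - P *v v"
    have "cinner (Q *v v) v = cinner (Q *v (P *v v)) (P *v v) + cinner (Q *v d) d"
      using pos_herm_cinner_expand[OF Q, of "P *v v" 1 d] orth[of v v]
      by (simp add: d_def)
    then show ?thesis
      using pos_herm_cinner_nonneg[OF Q, of d] by simp
  qed
  have "cinner (Q *v (P *v a)) b = cinner (Q *v (P *v a)) (P *v b)"
    using orth[of a b] by (simp add: cinner_diff_right)
  then have "cmod (cinner (Q *v (P *v a)) b)
      \<le> Re (cinner (Q *v (P *v a)) (P *v a)) + Re (cinner (Q *v (P *v b)) (P *v b))"
    using pos_herm_cinner_bound[OF Q] by simp
  then show ?thesis
    using shrink[of a] shrink[of b] by linarith
qed

lemma norm_mult_is_qproj_le:
  assumes "pos_herm Q" and "is_qproj Q W P"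
  shows "norm (Q ** P) \<le> (\<Sum>i\<in>UNIV. \<Sum>j\<in>UNIV.
      Re (cinner (Q *v axis j 1) (axis j 1)) + Re (cinner (Q *v axis i 1) (axis i 1)))"
proof -
  have entry: "cmod ((Q ** P) $ i $ j)
      \<le> Re (cinner (Q *v axis j 1) (axis j 1)) + Re (cinner (Q *v axis i 1) (axis i 1))" for i j
    using is_qproj_cinner_bound[OF assms, of "axis j 1" "axis i 1"]
    by (simp add: cinner_axis matrix_vector_mult_axis matrix_vector_mul_assoc)
  have "norm (Q ** P) \<le> (\<Sum>i\<in>UNIV. \<Sum>j\<in>UNIV. norm ((Q ** P) $ i $ j))"
    using norm_vec_le_sum_norm[of "Q ** P"] sum_mono[OF norm_vec_le_sum_norm]
    by (rule order_trans)
  also have "\<dots> \<le> (\<Sum>i\<in>UNIV. \<Sum>j\<in>UNIV.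
      Re (cinner (Q *v axis j 1) (axis j 1)) + Re (cinner (Q *v axis i 1) (axis i 1)))"
    by (intro sum_mono) (simp add: entry)
  finally show ?thesis .
qed

lemma borel_measurable_vec_iff:
  fixes f :: "'x \<Rightarrow> 'b::euclidean_space^'n"
  shows "f \<in> borel_measurable M \<longleftrightarrow> (\<forall>i. (\<lambda>x. f x $ i) \<in> borel_measurable M)"
proof
  assume f: "f \<in> borel_measurable M"
  show "\<forall>i. (\<lambda>x. f x $ i) \<in> borel_measurable M"
  proof
    fix i
    have "continuous_on UNIV (\<lambda>v::'b^'n. v $ i)"
      by (rule linear_continuous_on[OF bounded_linear_vec_nth])
    then show "(\<lambda>x. f x $ i) \<in> borel_measurable M"
      by (rule borel_measurable_continuous_on[OF _ f])
  qed
next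
  assume h: "\<forall>i. (\<lambda>x. f x $ i) \<in> borel_measurable M"
  show "f \<in> borel_measurable M"
    unfolding borel_measurable_euclidean_space[where f=f]
  proof
    fix b :: "'b^'n" assume "b \<in> Basis"
    then obtain i u where b: "b = axis i u"
      unfolding Basis_vec_def by blast
    have "(\<lambda>x. f x $ i \<bullet> u) \<in> borel_measurable M"
      using h by (intro borel_measurable_inner) auto
    then show "(\<lambda>x. f x \<bullet> b) \<in> borel_measurable M"
      by (simp add: b inner_axis)
  qed
qed

lemma borel_measurable_mat_iff:
  fixes f :: "'x \<Rightarrow> complex^'n^'m"
  shows "f \<in> borel_measurable M \<longleftrightarrow> (\<forall>i j. (\<lambda>x. f x $ i $ j) \<in> borel_measurable M)"
  by (simp add: borel_measurable_vec_iff[of f] borel_measurable_vec_iff[of "\<lambda>x. f x $ _"])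

lemma borel_measurable_matrix_mult:
  fixes f :: "'x \<Rightarrow> complex^'n^'m" and g :: "'x \<Rightarrow> complex^'k^'n"
  assumes "f \<in> borel_measurable M" "g \<in> borel_measurable M"
  shows "(\<lambda>x. f x ** g x) \<in> borel_measurable M"
  using assms unfolding borel_measurable_mat_iff matrix_matrix_mult_def
  by (auto intro!: borel_measurable_sum borel_measurable_times)

lemma borel_measurable_hadjoint:
  fixes f :: "'x \<Rightarrow> complex^'n^'m"
  assumes "f \<in> borel_measurable M"
  shows "(\<lambda>x. hadjoint (f x)) \<in> borel_measurable M"
  using assms unfolding borel_measurable_mat_iff hadjoint_def
  by (auto intro: borel_measurable_continuous_on[where f=cnj] continuous_on_cnj continuous_on_id)

lemma borel_measurable_det:
  fixes f :: "'x \<Rightarrow> complex^'n^'n"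
  assumes "f \<in> borel_measurable M"
  shows "(\<lambda>x. det (f x)) \<in> borel_measurable M"
  using assms unfolding det_def borel_measurable_mat_iff
  by (intro borel_measurable_sum borel_measurable_times borel_measurable_prod
      borel_measurable_const) auto

lemma borel_measurable_cramer_inv:
  fixes f :: "'x \<Rightarrow> complex^'n^'n"
  assumes f: "f \<in> borel_measurable M"
  shows "(\<lambda>x. cramer_inv (f x)) \<in> borel_measurable M"
proof -
  have "(\<lambda>x. (\<chi> a b. if b = k then axis j 1 $ a else f x $ a $ b) :: complex^'n^'n)
      \<in> borel_measurable M" for k j
    unfolding borel_measurable_mat_iff
  proof (intro allI)
    fix a b
    show "(\<lambda>x. (\<chi> a b. if b = k then axis j 1 $ a else f x $ a $ b) $ a $ b) \<in> borel_measurable M"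
      using f unfolding borel_measurable_mat_iff by (cases "b = k") simp_all
  qed
  then have "(\<lambda>x. det (\<chi> a b. if b = k then axis j 1 $ a else f x $ a $ b) / det (f x))
      \<in> borel_measurable M" for k j
    by (intro borel_measurable_divide borel_measurable_det f)
  then show ?thesis
    unfolding borel_measurable_mat_iff[of "\<lambda>x. cramer_inv (f x)"] by (simp add: cramer_inv_def)
qed

lemma bounded_linear_matrix_entry: "bounded_linear (\<lambda>A::'a::real_normed_vector^'n^'m. A $ i $ j)"
  using bounded_linear_compose[OF bounded_linear_vec_nth[of j] bounded_linear_vec_nth[of i]]
  by simp

lemma integral_matrix_entries:
  fixes f :: "'x \<Rightarrow> complex^'n^'m"
  assumes "integrable M f"
  shows "(\<chi> i j. integral\<^sup>L M (\<lambda>x. f x $ i $ j)) = integral\<^sup>L M f"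
  using integral_bounded_linear[OF bounded_linear_matrix_entry assms] by (simp add: vec_eq_iff)

lemma Tmap_eq_integral:
  fixes \<nu> :: "'x measure" and Ev :: "'x \<Rightarrow> complex^'n^'r"
  assumes fm: "finite_measure \<nu>" and Evm: "Ev \<in> borel_measurable \<nu>"
    and surj: "\<forall>x\<in>space \<nu>. \<forall>e. \<exists>s. Ev x *v s = e" and Q: "pos_herm Q"
  shows "Tmap \<nu> Ev Q = (real CARD('n) / (measure \<nu> (space \<nu>) * real CARD('r))) *\<^sub>R
      integral\<^sup>L \<nu> (\<lambda>x. Q ** qproj Q (Vsp Q Ev x))"
proof -
  obtain Qi where Qi: "Qi ** Q = mat 1"
    using pos_herm_left_inverse[OF Q] by blast
  define K where "K x = Q ** fibre_proj Qi (Ev x)" for x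
  have K: "Q ** qproj Q (Vsp Q Ev x) = K x" if "x \<in> space \<nu>" for x
    using qproj_Vsp[where Ev=Ev and x=x, OF Q Qi] surj that by (simp add: K_def)
  have "K \<in> borel_measurable \<nu>"
    unfolding K_def fibre_proj_def
    by (intro borel_measurable_matrix_mult borel_measurable_hadjoint
        borel_measurable_cramer_inv Evm borel_measurable_const)
  moreover have "norm (K x) \<le> (\<Sum>i\<in>UNIV. \<Sum>j\<in>UNIV.
      Re (cinner (Q *v axis j 1) (axis j 1)) + Re (cinner (Q *v axis i 1) (axis i 1)))"
    if "x \<in> space \<nu>" for x
    unfolding K_def
    by (rule norm_mult_is_qproj_le[OF Q is_qproj_fibre_proj[where Ev=Ev and x=x, OF Q Qi bspec[OF surj that]]])
  ultimately have "integrable \<nu> K"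
    by (intro finite_measure.integrable_const_bound[OF fm]) auto
  moreover have "qform (FS Q Ev x) (Ev x *v axis j 1) (Ev x *v axis i 1) = K x $ i $ j"
    if "x \<in> space \<nu>" for x i j
    using Hilb_integrand_FS[where Ev=Ev and x=x, OF Q Qi] surj that K[OF that] by simp
  ultimately show ?thesis
    using K unfolding Tmap_def Hilb_def
    by (simp add: integral_matrix_entries cong: Bochner_Integration.integral_cong)
qed

section \<open>Conjugating the inner product\<close>

lemma Vsp_image:
  assumes GF: "G ** F = mat 1" and hF: "Q ** F = hadjoint F ** Q" and hG: "Q ** G = hadjoint G ** Q"
  shows "(\<lambda>v. G *v v) ` Vsp Q Ev x = Vsp Q (\<lambda>y. Ev y ** G) x"
proof
  show "(\<lambda>v. G *v v) ` Vsp Q Ev x \<subseteq> Vsp Q (\<lambda>y. Ev y ** G) x"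
  proof
    fix v assume "v \<in> (\<lambda>v. G *v v) ` Vsp Q Ev x"
    then obtain u where u: "u \<in> Vsp Q Ev x" and v: "v = G *v u"
      by blast
    show "v \<in> Vsp Q (\<lambda>y. Ev y ** G) x"
      unfolding Vsp_def ker_ev_def
    proof (intro CollectI ballI)
      fix s assume "s \<in> {s. (Ev x ** G) *v s = 0}"
      then have "qform Q (G *v s) u = 0"
        using u by (simp add: Vsp_def ker_ev_def matrix_vector_mul_assoc)
      then show "qform Q s v = 0"
        by (simp add: v qform_eq_cinner cinner_matrix_vector_right matrix_vector_mul_assoc hG)
    qed
  qed
  show "Vsp Q (\<lambda>y. Ev y ** G) x \<subseteq> (\<lambda>v. G *v v) ` Vsp Q Ev x"
  proof
    fix v assume v: "v \<in> Vsp Q (\<lambda>y. Ev y ** G) x"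
    have "F *v v \<in> Vsp Q Ev x"
      unfolding Vsp_def ker_ev_def
    proof (intro CollectI ballI)
      fix k assume "k \<in> {s. Ev x *v s = 0}"
      then have "(Ev x ** G) *v (F *v k) = 0"
        by (simp add: matrix_vector_mul_assoc GF flip: matrix_mul_assoc)
      then have "qform Q (F *v k) v = 0"
        using v by (simp add: Vsp_def ker_ev_def)
      then show "qform Q k (F *v v) = 0"
        by (simp add: qform_eq_cinner cinner_matrix_vector_right matrix_vector_mul_assoc hF)
    qed
    moreover have "v = G *v (F *v v)"
      by (simp add: matrix_vector_mul_assoc GF)
    ultimately show "v \<in> (\<lambda>v. G *v v) ` Vsp Q Ev x"
      by blast
  qed
qed

lemma pos_herm_conj:
  assumes Q: "pos_herm Q" and GF: "G ** F = mat 1" and hF: "Q ** F = hadjoint F ** Q"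
  shows "pos_herm (Q ** F ** F)"
proof -
  have conj: "Q ** F ** F = hadjoint F ** Q ** F"
    by (simp only: hF)
  have "hadjoint (Q ** F ** F) = Q ** F ** F"
    using Q by (simp add: conj pos_herm_def hadjoint_mult matrix_mul_assoc)
  moreover have "0 < Re (cinner ((Q ** F ** F) *v v) v)" if "v \<noteq> 0" for v
  proof -
    have "v = G *v (F *v v)"
      by (simp add: matrix_vector_mul_assoc GF)
    then have "F *v v \<noteq> 0"
      using that by auto
    then have "0 < Re (cinner (Q *v (F *v v)) (F *v v))"
      by (rule pos_herm_cinner_pos[OF Q])
    also have "cinner (Q *v (F *v v)) (F *v v) = cinner (hadjoint F *v (Q *v (F *v v))) v"
      by (simp add: cinner_matrix_vector_left)
    also have "\<dots> = cinner ((Q ** F ** F) *v v) v"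
      by (simp only: conj matrix_vector_mul_assoc matrix_mul_assoc)
    finally show ?thesis .
  qed
  ultimately show ?thesis
    by (simp add: pos_herm_def)
qed

lemma conj_mult_qproj:
  assumes Q: "pos_herm Q" "Qi ** Q = mat 1" and GF: "G ** F = mat 1"
    and hF: "Q ** F = hadjoint F ** Q" and hG: "Q ** G = hadjoint G ** Q"
    and surj: "\<forall>e. \<exists>s. Ev x *v s = e"
  shows "(Q ** F ** F) ** qproj (Q ** F ** F) (Vsp (Q ** F ** F) Ev x)
       = hadjoint F ** Q ** qproj Q ((\<lambda>v. G *v v) ` Vsp Q Ev x) ** F"
proof -
  have FG: "F ** G = mat 1"
    using GF matrix_left_right_inverse by blast
  have QQi: "Q ** Qi = mat 1"
    using pos_herm_inverse[OF Q] by auto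
  have cancel: "X ** Qi ** Q = X" "X ** Q ** Qi = X" "X ** G ** F = X"
    "hadjoint F ** hadjoint G = mat 1" for X
    by (simp_all add: Q(2) QQi GF FG flip: matrix_mul_assoc hadjoint_mult)
  have aG: "hadjoint G = Q ** G ** Qi"
    by (simp only: hG cancel)
  define E where "E = Ev x"
  define E' where "E' = E ** G"
  define R where "R = cramer_inv (E ** (G ** G ** Qi) ** hadjoint E)"
  have Q': "pos_herm (Q ** F ** F)" "(G ** G ** Qi) ** (Q ** F ** F) = mat 1"
    using pos_herm_conj[OF Q(1) GF hF] cancel(1)[of "G ** G"] cancel(3)[of G]
    by (simp_all only: GF matrix_mul_assoc matrix_mul_lid)
  have gram: "E' ** Qi ** hadjoint E' = E ** (G ** G ** Qi) ** hadjoint E"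
  proof -
    have "E' ** Qi ** hadjoint E' = E ** G ** Qi ** Q ** G ** Qi ** hadjoint E"
      by (simp only: E'_def hadjoint_mult aG matrix_mul_assoc)
    then show ?thesis
      by (simp only: cancel matrix_mul_assoc)
  qed
  have "\<forall>e. \<exists>s. E' *v s = e"
  proof
    fix e
    obtain s where "Ev x *v s = e"
      using surj by blast
    then have "E' *v (F *v s) = e"
      by (simp add: E'_def E_def matrix_vector_mul_assoc cancel)
    then show "\<exists>s. E' *v s = e" ..
  qed
  then have "qproj Q ((\<lambda>v. G *v v) ` Vsp Q Ev x) = fibre_proj Qi E'"
    unfolding Vsp_image[OF GF hF hG]
    using qproj_Vsp[where Ev="\<lambda>y. Ev y ** G" and x=x, OF Q] by (simp add: E'_def E_def)
  also have "\<dots> = Qi ** hadjoint E' ** R ** E'"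
    by (simp add: fibre_proj_def gram R_def)
  finally have "hadjoint F ** Q ** qproj Q ((\<lambda>v. G *v v) ` Vsp Q Ev x) ** F
      = hadjoint F ** Q ** Qi ** hadjoint G ** hadjoint E ** R ** E ** G ** F"
    by (simp only: E'_def hadjoint_mult matrix_mul_assoc)
  also have "\<dots> = hadjoint E ** R ** E"
    by (simp only: cancel matrix_mul_lid)
  also have "\<dots> = (Q ** F ** F) ** qproj (Q ** F ** F) (Vsp (Q ** F ** F) Ev x)"
    using qproj_Vsp[where Ev=Ev and x=x, OF Q' surj] mult_fibre_proj[OF Q', of E]
    by (simp add: E_def R_def)
  finally show ?thesis ..
qed

lemma Tmap_conj:
  fixes \<nu> :: "'x measure" and Ev :: "'x \<Rightarrow> complex^'n^'r"
  assumes fm: "finite_measure \<nu>" and Evm: "Ev \<in> borel_measurable \<nu>"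
    and surj: "\<forall>x\<in>space \<nu>. \<forall>e. \<exists>s. Ev x *v s = e" and Q: "pos_herm Q"
    and GF: "G ** F = mat 1" and hF: "Q ** F = hadjoint F ** Q" and hG: "Q ** G = hadjoint G ** Q"
  shows "Tmap \<nu> Ev (Q ** F ** F)
     = (real CARD('n) / (measure \<nu> (space \<nu>) * real CARD('r))) *\<^sub>R (hadjoint F ** Q ** mu \<nu> Q Ev G ** F)"
proof -
  obtain Qi where Qi: "Qi ** Q = mat 1"
    using pos_herm_left_inverse[OF Q] by blast
  have FG: "F ** G = mat 1"
    using GF matrix_left_right_inverse by blast
  have sandwich_inverse: "Qi ** hadjoint G ** (hadjoint F ** Q ** X ** F) ** G = X" for X
  proof -
    have "hadjoint G ** hadjoint F = mat 1"
      by (simp add: FG flip: hadjoint_mult)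
    moreover have "Qi ** hadjoint G ** (hadjoint F ** Q ** X ** F) ** G
        = Qi ** (hadjoint G ** hadjoint F) ** Q ** X ** (F ** G)"
      by (simp only: matrix_mul_assoc)
    ultimately show ?thesis
      by (simp add: Qi FG)
  qed
  have "integral\<^sup>L \<nu> (\<lambda>x. (Q ** F ** F) ** qproj (Q ** F ** F) (Vsp (Q ** F ** F) Ev x))
      = integral\<^sup>L \<nu> (\<lambda>x. hadjoint F ** Q ** qproj Q ((\<lambda>v. G *v v) ` Vsp Q Ev x) ** F)"
    using conj_mult_qproj[where Ev=Ev, OF Q Qi GF hF hG] surj by (intro Bochner_Integration.integral_cong) auto
  also have "\<dots> = hadjoint F ** Q ** mu \<nu> Q Ev G ** F"
    unfolding mu_def
    by (rule integral_bounded_linear'[where T'="\<lambda>Y. Qi ** hadjoint G ** Y ** G"])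
      (simp_all add: sandwich_inverse bounded_linear_compose[OF bounded_linear_matrix_mult_right
        bounded_linear_matrix_mult_left])
  finally show ?thesis
    using Tmap_eq_integral[OF fm Evm surj pos_herm_conj[OF Q GF hF]] by simp
qed

section \<open>Differentiating at a balanced product\<close>

lemma has_vector_derivative_sandwich:
  fixes F M :: "real \<Rightarrow> complex^'n^'n"
  assumes "(F has_vector_derivative F') (at x within S)" "(M has_vector_derivative M') (at x within S)"
  shows "((\<lambda>t. F t ** M t ** F t) has_vector_derivative
      F' ** M x ** F x + F x ** M' ** F x + F x ** M x ** F') (at x within S)"
proof -
  interpret mult: bounded_bilinear "\<lambda>(A::complex^'n^'n) (B::complex^'n^'n). A ** B"
    by (rule bounded_bilinear_matrix_mult)
  show ?thesis
    using mult.has_vector_derivative[OF mult.has_vector_derivative[OF assms] assms(1)]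
    by (simp add: matrix_add_ldistrib matrix_add_rdistrib ac_simps)
qed

lemma Tmap_mexp:
  fixes \<nu> :: "'x measure" and Ev :: "'x \<Rightarrow> complex^'n^'r"
  assumes fm: "finite_measure \<nu>" and Evm: "Ev \<in> borel_measurable \<nu>"
    and surj: "\<forall>x\<in>space \<nu>. \<forall>e. \<exists>s. Ev x *v s = e" and Q: "pos_herm Q"
    and hA: "Q ** A = hadjoint A ** Q"
  shows "Tmap \<nu> Ev (Q ** mexp (t *\<^sub>R A))
     = (real CARD('n) / (measure \<nu> (space \<nu>) * real CARD('r))) *\<^sub>R
       (Q ** (mexp ((t / 2) *\<^sub>R A) ** mu \<nu> Q Ev (mexp ((- t / 2) *\<^sub>R A)) ** mexp ((t / 2) *\<^sub>R A)))"
proof -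
  have h: "Q ** mexp (s *\<^sub>R A) = hadjoint (mexp (s *\<^sub>R A)) ** Q" for s
    by (rule q_herm_mexp) (simp add: hA matrix_scalar_ac scalar_matrix_assoc[symmetric] hadjoint_scaleR)
  have GF: "mexp ((- t / 2) *\<^sub>R A) ** mexp ((t / 2) *\<^sub>R A) = mat 1"
    and FF: "mexp ((t / 2) *\<^sub>R A) ** mexp ((t / 2) *\<^sub>R A) = mexp (t *\<^sub>R A)"
    by (simp_all only: mexp_add_scaleR) (simp_all add: mexp_zero)
  have "Tmap \<nu> Ev (Q ** mexp (t *\<^sub>R A))
      = Tmap \<nu> Ev (Q ** mexp ((t / 2) *\<^sub>R A) ** mexp ((t / 2) *\<^sub>R A))"
    by (simp only: FF matrix_mul_assoc[symmetric])
  also have "\<dots> = (real CARD('n) / (measure \<nu> (space \<nu>) * real CARD('r))) *\<^sub>R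
      (hadjoint (mexp ((t / 2) *\<^sub>R A)) ** Q ** mu \<nu> Q Ev (mexp ((- t / 2) *\<^sub>R A))
        ** mexp ((t / 2) *\<^sub>R A))"
    by (rule Tmap_conj[OF fm Evm surj Q GF h h])
  finally show ?thesis
    by (simp only: h[symmetric] matrix_mul_assoc)
qed

lemma balanced_mu_one:
  fixes \<nu> :: "'x measure" and Ev :: "'x \<Rightarrow> complex^'n^'r"
  assumes fm: "finite_measure \<nu>" and Evm: "Ev \<in> borel_measurable \<nu>"
    and surj: "\<forall>x\<in>space \<nu>. \<forall>e. \<exists>s. Ev x *v s = e" and Q: "pos_herm Q"
    and "balanced \<nu> Ev Q"
  shows "(real CARD('n) / (measure \<nu> (space \<nu>) * real CARD('r))) *\<^sub>R mu \<nu> Q Ev (mat 1) = mat 1"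
proof -
  obtain Qi where Qi: "Qi ** Q = mat 1"
    using pos_herm_left_inverse[OF Q] by blast
  have "Q = (real CARD('n) / (measure \<nu> (space \<nu>) * real CARD('r))) *\<^sub>R (Q ** mu \<nu> Q Ev (mat 1))"
    using Tmap_conj[OF fm Evm surj Q, of "mat 1" "mat 1"] assms(5) by (simp add: balanced_def)
  then have "Qi ** Q = Qi ** ((real CARD('n) / (measure \<nu> (space \<nu>) * real CARD('r))) *\<^sub>R
      (Q ** mu \<nu> Q Ev (mat 1)))"
    by simp
  then show ?thesis
    by (simp add: Qi matrix_scalar_ac scalar_matrix_assoc[symmetric] matrix_mul_assoc)
qed

lemma scaleR_half_sym_mult_eq:
  fixes A D M :: "'n::finite cmatrix"
  assumes "c *\<^sub>R M = mat 1"
  shows "c *\<^sub>R ((1/2) *\<^sub>R A ** M - D + M ** (1/2) *\<^sub>R A) = A - c *\<^sub>R D"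
proof -
  have "c *\<^sub>R ((1/2) *\<^sub>R A ** M - D + M ** (1/2) *\<^sub>R A)
      = (1/2) *\<^sub>R A ** (c *\<^sub>R M) - c *\<^sub>R D + (c *\<^sub>R M) ** (1/2) *\<^sub>R A"
    by (simp add: matrix_scalar_ac scalar_matrix_assoc[symmetric] algebra_simps)
  also have "\<dots> = (1/2) *\<^sub>R A + (1/2) *\<^sub>R A - c *\<^sub>R D"
    by (simp add: assms algebra_simps)
  also have "\<dots> = A - c *\<^sub>R D"
    by (simp flip: scaleR_add_left)
  finally show ?thesis .
qed

lemma matrix_left_cancel: "Qi ** Q = mat 1 \<Longrightarrow> Q ** X = Q ** Y \<Longrightarrow> X = Y"
  by (metis matrix_mul_assoc matrix_mul_lid)

lemma has_vector_derivative_Tmap_mexp: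
  fixes \<nu> :: "'x measure" and Ev :: "'x \<Rightarrow> complex^'n^'r"
  assumes fm: "finite_measure \<nu>" and Evm: "Ev \<in> borel_measurable \<nu>"
    and surj: "\<forall>x\<in>space \<nu>. \<forall>e. \<exists>s. Ev x *v s = e" and Q: "pos_herm Q"
    and bal: "balanced \<nu> Ev Q" and hA: "Q ** A = hadjoint A ** Q"
    and dmu: "((\<lambda>t. mu \<nu> Q Ev (mexp ((t / 2) *\<^sub>R A))) has_vector_derivative DM) (at 0)"
  shows "((\<lambda>t. Tmap \<nu> Ev (Q ** mexp (t *\<^sub>R A))) has_vector_derivative
      Q ** (A - (real CARD('n) / (measure \<nu> (space \<nu>) * real CARD('r))) *\<^sub>R DM)) (at 0)"
proof -
  define c where "c = real CARD('n) / (measure \<nu> (space \<nu>) * real CARD('r))"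
  define M where "M = mu \<nu> Q Ev (mat 1)"
  have dF: "((\<lambda>t. mexp ((t / 2) *\<^sub>R A)) has_vector_derivative (1/2) *\<^sub>R A) (at 0)"
    using has_vector_derivative_mexp[of "(1/2) *\<^sub>R A"] by (simp add: field_simps)
  have "((\<lambda>t. mu \<nu> Q Ev (mexp ((- t / 2) *\<^sub>R A))) has_vector_derivative - DM) (at 0)"
    using vector_diff_chain_at[OF has_vector_derivative_minus[OF has_vector_derivative_id],
        where g="\<lambda>t. mu \<nu> Q Ev (mexp ((t / 2) *\<^sub>R A))" and g'=DM and x=0] dmu
    by (simp add: o_def)
  from has_vector_derivative_sandwich[OF dF this]
  have "((\<lambda>t. Tmap \<nu> Ev (Q ** mexp (t *\<^sub>R A))) has_vector_derivative
      c *\<^sub>R (Q ** ((1/2) *\<^sub>R A ** M - DM + M ** (1/2) *\<^sub>R A))) (at 0)"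
    unfolding Tmap_mexp[OF fm Evm surj Q hA] c_def M_def
    by (intro bounded_linear.has_vector_derivative[OF bounded_linear_scaleR_right]
        bounded_linear.has_vector_derivative[OF bounded_linear_matrix_mult_left])
      (simp add: mexp_zero)
  moreover have "c *\<^sub>R (Q ** ((1/2) *\<^sub>R A ** M - DM + M ** (1/2) *\<^sub>R A))
      = Q ** (c *\<^sub>R ((1/2) *\<^sub>R A ** M - DM + M ** (1/2) *\<^sub>R A))"
    by (simp only: matrix_scalar_ac scalar_matrix_assoc)
  moreover have "c *\<^sub>R ((1/2) *\<^sub>R A ** M - DM + M ** (1/2) *\<^sub>R A) = A - c *\<^sub>R DM"
    by (rule scaleR_half_sym_mult_eq[OF balanced_mu_one[OF fm Evm surj Q bal, folded c_def M_def]])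
  ultimately show ?thesis
    by (simp add: c_def)
qed

theorem proposition4p13:
  fixes \<nu> :: "'x measure" and Ev :: "'x \<Rightarrow> complex^'n^'r"
    and Q A DM B :: "complex^'n^'n"
  assumes "finite_measure \<nu>"
    and "0 < measure \<nu> (space \<nu>)"
    and "Ev \<in> borel_measurable \<nu>"
    and "\<forall>x\<in>space \<nu>. \<forall>e. \<exists>s. Ev x *v s = e"
    and "is_prod Q"
    and "balanced \<nu> Ev Q"
    and "q_herm Q A"
    and "((\<lambda>t. mu \<nu> Q Ev (mexp ((t / 2) *\<^sub>R A))) has_vector_derivative DM) (at 0)"
    and "q_herm Q B"
    and "((\<lambda>t. Tmap \<nu> Ev (Q ** mexp (t *\<^sub>R A))) has_vector_derivative (Q ** B)) (at 0)"
  shows "(real CARD('n) / (measure \<nu> (space \<nu>) * real CARD('r))) *\<^sub>R DM = A - B"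
proof -
  have Q: "pos_herm Q"
    using assms(5) by (rule is_prod_imp_pos_herm)
  obtain Qi where Qi: "Qi ** Q = mat 1"
    using pos_herm_left_inverse[OF Q] by blast
  have hA: "Q ** A = hadjoint A ** Q"
    using assms(7) q_herm_iff[of Q A] Q unfolding pos_herm_def by blast
  have "Q ** B = Q ** (A - (real CARD('n) / (measure \<nu> (space \<nu>) * real CARD('r))) *\<^sub>R DM)"
    by (rule vector_derivative_unique_at[OF assms(10)
          has_vector_derivative_Tmap_mexp[OF assms(1,3,4) Q assms(6) hA assms(8)]])
  then have "B = A - (real CARD('n) / (measure \<nu> (space \<nu>) * real CARD('r))) *\<^sub>R DM"
    by (rule matrix_left_cancel[OF Qi])
  then show ?thesis
    by simp
qed

end
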